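(* Let $X$ be a set and $f=(f_1,\ldots,f_m):X\to\mathbb{R}^m$ a mapping such that $f(X)$ is convex. Then the following are equivalent: $(\alpha)$ $\mathrm{WE}(f,X)=\mathrm{E}(f,X)$; $(\beta)$ $\displaystyle\bigcup_{\emptyset\neq I\subseteq M}\mathrm{E}(f_I,X)\subseteq\mathrm{E}(f,X)$, where $M=\{1,\ldots,m\}$.
   Context: Let $M=\{1,\ldots,m\}$. For a nonempty $I\subseteq M$ and $y,y'\in\mathbb{R}^m$: $y\lneq_I y'$ means $y_i\leq y'_i$ for all $i\in I$ and $y_j<y'_j$ for some $j\in I$; $y<_I y'$ means $y_i<y'_i$ for all $i\in I$. For $Y\subseteq\mathbb{R}^m$, $\mathrm{M}_I Y$ (resp. $\mathrm{WM}_I Y$) is the set of all $y'\in Y$ for which there is no $y\in Y$ with $y\lneq_I y'$ (resp. $y<_I y'$). For $f=(f_1,\ldots,f_m):X\to\mathbb{R}^m$ and $I=\{i_1<\cdots<i_k\}$, $f_I=(f_{i_1},\ldots,f_{i_k})$, and $\mathrm{E}(f_I,X)=f^{-1}(\mathrm{M}_I f(X))$, $\mathrm{WE}(f_I,X)=f^{-1}(\mathrm{WM}_I f(X))$; $\mathrm{E}(f,X)=\mathrm{E}(f_M,X)$, $\mathrm{WE}(f,X)=\mathrm{WE}(f_M,X)$. *)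

theory Defs
  imports "HOL-Analysis.Analysis"
begin

text \<open>Vectors in R^m are modelled as real^'m, with index set M = UNIV :: 'm set.\<close>

definition le_I :: "'m set \<Rightarrow> real^'m \<Rightarrow> real^'m \<Rightarrow> bool" where
  "le_I I y y' \<longleftrightarrow> (\<forall>i\<in>I. y$i \<le> y'$i) \<and> (\<exists>j\<in>I. y$j < y'$j)"

definition lt_I :: "'m set \<Rightarrow> real^'m \<Rightarrow> real^'m \<Rightarrow> bool" where
  "lt_I I y y' \<longleftrightarrow> (\<forall>i\<in>I. y$i < y'$i)"

definition Min_I :: "'m set \<Rightarrow> (real^'m) set \<Rightarrow> (real^'m) set" where
  "Min_I I Y = {y'\<in>Y. \<not> (\<exists>y\<in>Y. le_I I y y')}"

definition WMin_I :: "'m set \<Rightarrow> (real^'m) set \<Rightarrow> (real^'m) set" where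
  "WMin_I I Y = {y'\<in>Y. \<not> (\<exists>y\<in>Y. lt_I I y y')}"

definition Eff :: "('a \<Rightarrow> real^'m) \<Rightarrow> 'm set \<Rightarrow> 'a set \<Rightarrow> 'a set" where
  "Eff f I X = {x\<in>X. f x \<in> Min_I I (f ` X)}"

definition WEff :: "('a \<Rightarrow> real^'m) \<Rightarrow> 'm set \<Rightarrow> 'a set \<Rightarrow> 'a set" where
  "WEff f I X = {x\<in>X. f x \<in> WMin_I I (f ` X)}"

end

theory Submission
  imports Defs
begin

text \<open>A point that is Pareto minimal for a nonempty subfamily \<open>J\<close> of the criteria is weakly
minimal for every family containing \<open>J\<close>, which gives one direction. Conversely, let \<open>y\<close> be weakly
minimal for the criteria \<open>I\<close> but not minimal, witnessed by some \<open>z\<close> dominating \<open>y\<close> on \<open>I\<close>. On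
the criteria \<open>J \<subset> I\<close> where \<open>z\<close> does not strictly improve on \<open>y\<close>, the point \<open>y\<close> remains weakly
minimal: otherwise some \<open>w\<close> is strictly better on \<open>J\<close>, and by convexity a combination of \<open>z\<close> with
a small weight on \<open>w\<close> is strictly better on all of \<open>I\<close>. Induction on \<open>card I\<close> then yields a
nonempty \<open>J \<subseteq> I\<close> for which \<open>y\<close> is minimal.\<close>

lemma Min_I_subset_WMin_I:
  assumes "J \<noteq> {}" and "J \<subseteq> I"
  shows "Min_I J Y \<subseteq> WMin_I I Y"
  using assms by (fastforce simp: Min_I_def WMin_I_def le_I_def lt_I_def less_imp_le)

lemma convex_lt_I_combination:
  fixes Y :: "(real^'m) set"
  assumes "convex Y" and "z \<in> Y" and "w \<in> Y"
    and z_le: "\<forall>i\<in>I. z$i \<le> y$i"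
    and w_lt: "\<forall>i\<in>I. z$i = y$i \<longrightarrow> w$i < y$i"
  shows "\<exists>u\<in>Y. lt_I I u y"
proof -
  have "\<forall>\<^sub>F t in at_right (0::real). (1 - t) * z$i + t * w$i < y$i" if i: "i \<in> I" for i
  proof (cases "z$i = y$i")
    case True
    have "\<forall>\<^sub>F t in at_right (0::real). 0 < t"
      by (simp add: eventually_at_right_less)
    then show ?thesis
      by eventually_elim (use True w_lt i in \<open>simp add: algebra_simps\<close>)
  next
    case False
    have "((\<lambda>t::real. (1 - t) * z$i + t * w$i) \<longlongrightarrow> (1 - 0) * z$i + 0 * w$i) (at_right 0)"
      by (intro tendsto_intros)
    then show ?thesis
      using False z_le i by (intro order_tendstoD(2)) (auto simp: order.strict_iff_order)
  qed
  then have "\<forall>\<^sub>F t in at_right (0::real). \<forall>i\<in>I. (1 - t) * z$i + t * w$i < y$i"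
    by (intro eventually_ball_finite) auto
  moreover have "\<forall>\<^sub>F t in at_right (0::real). 0 < t \<and> t < 1"
    by (simp add: eventually_at_right_field) (rule exI[of _ 1], auto)
  ultimately have "\<exists>t. (\<forall>i\<in>I. (1 - t) * z$i + t * w$i < y$i) \<and> 0 < t \<and> t < 1"
    by (rule eventually_happens'[OF trivial_limit_at_right_real eventually_conj])
  then obtain t where t: "0 < t" "t < 1" and lt: "\<forall>i\<in>I. (1 - t) * z$i + t * w$i < y$i"
    by blast
  have "(1 - t) *\<^sub>R z + t *\<^sub>R w \<in> Y"
    using assms(1-3) t by (auto simp: convex_def)
  moreover have "lt_I I ((1 - t) *\<^sub>R z + t *\<^sub>R w) y"
    using lt by (simp add: lt_I_def)
  ultimately show ?thesis by blast
qed

lemma WMin_I_imp_Min_I_subfamily: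
  fixes Y :: "(real^'m) set"
  assumes "convex Y" and "I \<noteq> {}" and "y \<in> WMin_I I Y"
  shows "\<exists>J. J \<noteq> {} \<and> J \<subseteq> I \<and> y \<in> Min_I J Y"
  using assms(2,3)
proof (induction "card I" arbitrary: I rule: less_induct)
  case less
  show ?case
  proof (cases "y \<in> Min_I I Y")
    case True
    then show ?thesis using less.prems(1) by blast
  next
    case False
    have yY: "y \<in> Y" and weak: "\<not> (\<exists>u\<in>Y. lt_I I u y)"
      using less.prems(2) by (auto simp: WMin_I_def)
    then obtain z where zY: "z \<in> Y" and z_le: "le_I I z y"
      using False by (auto simp: Min_I_def)
    define J where "J = {i\<in>I. z$i = y$i}"
    have "J \<subseteq> I"
      by (auto simp: J_def)
    moreover have "J \<noteq> I"
      using z_le unfolding J_def le_I_def by (metis (mono_tags, lifting) less_irrefl mem_Collect_eq)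
    ultimately have "J \<subset> I"
      by blast
    show ?thesis
    proof (cases "J \<noteq> {} \<and> y \<in> WMin_I J Y")
      case True
      have "card J < card I"
        using \<open>J \<subset> I\<close> by (simp add: psubset_card_mono)
      then show ?thesis
        using less.hyps[OF \<open>card J < card I\<close>] True \<open>J \<subset> I\<close> by blast
    next
      case False
      obtain w where "w \<in> Y" and "lt_I J w y"
      proof (cases "J = {}")
        case True
        \<comment> \<open>\<open>lt_I {}\<close> holds vacuously, so \<open>y\<close> itself is a witness\<close>
        then show ?thesis using that yY by (simp add: lt_I_def)
      next
        case False
        then show ?thesis
          using that yY \<open>\<not> (J \<noteq> {} \<and> y \<in> WMin_I J Y)\<close> by (auto simp: WMin_I_def)
      qed
      moreover have "\<forall>i\<in>I. z$i \<le> y$i"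
        using z_le by (simp add: le_I_def)
      ultimately have "\<exists>u\<in>Y. lt_I I u y"
        by (intro convex_lt_I_combination[OF assms(1) zY]) (auto simp: J_def lt_I_def)
      with weak show ?thesis by blast
    qed
  qed
qed

theorem corollary6p1:
  fixes X :: "'a set" and f :: "'a \<Rightarrow> real^'m"
  assumes "convex (f ` X)"
  shows "WEff f UNIV X = Eff f UNIV X \<longleftrightarrow>
         (\<Union>I\<in>{I. I \<noteq> {}}. Eff f I X) \<subseteq> Eff f UNIV X"
proof
  have "Eff f I X \<subseteq> WEff f UNIV X" if "I \<noteq> {}" for I
    using Min_I_subset_WMin_I[OF that subset_UNIV] by (auto simp: Eff_def WEff_def)
  then show "(\<Union>I\<in>{I. I \<noteq> {}}. Eff f I X) \<subseteq> Eff f UNIV X"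
    if "WEff f UNIV X = Eff f UNIV X" using that by blast
next
  assume subfamilies: "(\<Union>I\<in>{I. I \<noteq> {}}. Eff f I X) \<subseteq> Eff f UNIV X"
  have "WEff f UNIV X \<subseteq> Eff f UNIV X"
  proof
    fix x assume "x \<in> WEff f UNIV X"
    then have "x \<in> X" and "f x \<in> WMin_I UNIV (f ` X)"
      by (auto simp: WEff_def)
    then obtain J where "J \<noteq> {}" and "x \<in> Eff f J X"
      using WMin_I_imp_Min_I_subfamily[OF assms UNIV_not_empty] by (auto simp: Eff_def)
    then show "x \<in> Eff f UNIV X" using subfamilies by blast
  qed
  moreover have "Eff f UNIV X \<subseteq> WEff f UNIV X"
    using Min_I_subset_WMin_I[of UNIV UNIV] by (auto simp: Eff_def WEff_def)
  ultimately show "WEff f UNIV X = Eff f UNIV X" by blast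
qed

end
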